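(* Let $(C,\mathfrak p,\mathfrak d)$ be a regular $q$-cycle coalgebra with $\mathfrak p_{11}^1\ne0$. Then $\mathfrak d=\mathfrak p$ (equivalently, the associated solution of the braid equation is involutive).
   Context: $K$ is an algebraically closed field of characteristic $0$ and $n\ge2$. $C$ is the coalgebra dual to $K[y]/\langle y^n\rangle$: basis $x_0,\dots,x_{n-1}$, $\Delta(x_i)=\sum_{j+k=i}x_j\otimes x_k$, $\epsilon(x_i)=\delta_{i0}$; $C\otimes C$ has the tensor product coalgebra structure; Sweedler notation $\Delta(b)=b_{(1)}\otimes b_{(2)}$. For linear maps $\mathfrak p,\mathfrak d\colon C\otimes C\to C$ write $a\cdot b=\mathfrak p(a\otimes b)$, $a:b=\mathfrak d(a\otimes b)$, $\mathfrak p(x_i\otimes x_j)=\sum_{k=0}^{n-1}\mathfrak p_{ij}^kx_k$, $\mathfrak d(x_i\otimes x_j)=\sum_{k=0}^{n-1}\mathfrak d_{ij}^kx_k$. A triple $(C,\mathfrak p,\mathfrak d)$ with $\mathfrak p,\mathfrak d$ coalgebra morphisms is a regular $q$-magma coalgebra if there are coalgebra morphisms $a\otimes b\mapsto a^b$, $a\otimes b\mapsto a_b$ from $C\otimes C$ to $C$ with $a^{b_{(1)}}\cdot b_{(2)}=(a\cdot b_{(1)})^{b_{(2)}}=\epsilon(b)a$ and $(a:b_{(2)})_{b_{(1)}}=a_{b_{(2)}}:b_{(1)}=\epsilon(b)a$. It is a regular $q$-cycle coalgebra if moreover for all $a,b,c$: (1) $(a\cdot b_{(1)})\cdot(c:b_{(2)})=(a\cdot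 c_{(2)})\cdot(b\cdot c_{(1)})$; (2) $(a\cdot b_{(1)}):(c\cdot b_{(2)})=(a:c_{(2)})\cdot(b:c_{(1)})$; (3) $(a:b_{(1)}):(c:b_{(2)})=(a:c_{(2)}):(b\cdot c_{(1)})$. *)

theory Defs
  imports "HOL-Computational_Algebra.Polynomial"
begin

definition alg_closed_field :: "'a::field itself \<Rightarrow> bool" where
  "alg_closed_field _ \<longleftrightarrow> (\<forall>q::'a poly. degree q \<ge> 1 \<longrightarrow> (\<exists>x. poly q x = 0))"

text \<open>Elements of C are coefficient vectors v (v = sum of v k * x_k), supported on {..<n}.\<close>
definition Cvec :: "nat \<Rightarrow> (nat \<Rightarrow> 'a::zero) set" where
  "Cvec n = {v. \<forall>k\<ge>n. v k = 0}"

definition bas :: "nat \<Rightarrow> nat \<Rightarrow> 'a::{zero,one}" where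
  "bas i = (\<lambda>k. if k = i then 1 else 0)"

text \<open>Linear map C \<otimes> C \<rightarrow> C with structure constants F i j k (F(x_i \<otimes> x_j) = sum_k F i j k x_k),
  applied to the pure tensor v \<otimes> w.\<close>
definition bil :: "nat \<Rightarrow> (nat \<Rightarrow> nat \<Rightarrow> nat \<Rightarrow> 'a::comm_ring_1) \<Rightarrow> (nat \<Rightarrow> 'a) \<Rightarrow> (nat \<Rightarrow> 'a) \<Rightarrow> (nat \<Rightarrow> 'a)" where
  "bil n F v w = (\<lambda>k. if k < n then (\<Sum>i<n. \<Sum>j<n. v i * w j * F i j k) else 0)"

text \<open>Sweedler sum: for b = sum_j b j x_j, with \<Delta>(x_j) = sum_{j1+j2=j} x_j1 \<otimes> x_j2,
  sw n b G = G(b_(1), b_(2)) for G bilinear, i.e. sum_j b j * sum_{j1<=j} G (x_j1) (x_(j-j1)).\<close>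
definition sw :: "nat \<Rightarrow> (nat \<Rightarrow> 'a::comm_ring_1) \<Rightarrow> ((nat \<Rightarrow> 'a) \<Rightarrow> (nat \<Rightarrow> 'a) \<Rightarrow> (nat \<Rightarrow> 'a)) \<Rightarrow> (nat \<Rightarrow> 'a)" where
  "sw n b G = (\<lambda>k. \<Sum>j<n. b j * (\<Sum>j1\<le>j. G (bas j1) (bas (j - j1)) k))"

definition eps :: "(nat \<Rightarrow> 'a::zero) \<Rightarrow> 'a" where
  "eps v = v 0"

text \<open>Comultiplication of C as an element of C \<otimes> C (coefficient of x_a \<otimes> x_b).\<close>
definition comul :: "nat \<Rightarrow> (nat \<Rightarrow> 'a::zero) \<Rightarrow> nat \<Rightarrow> nat \<Rightarrow> 'a" where
  "comul n v = (\<lambda>a b. if a < n \<and> b < n \<and> a + b < n then v (a + b) else 0)"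

definition tens :: "(nat \<Rightarrow> 'a::times) \<Rightarrow> (nat \<Rightarrow> 'a) \<Rightarrow> nat \<Rightarrow> nat \<Rightarrow> 'a" where
  "tens v w = (\<lambda>a b. v a * w b)"

text \<open>F : C \<otimes> C \<rightarrow> C is a coalgebra morphism (C \<otimes> C with the tensor product coalgebra structure:
  \<Delta>(x_i \<otimes> x_j) = sum (x_i1 \<otimes> x_j1) \<otimes> (x_i2 \<otimes> x_j2), \<epsilon>(x_i \<otimes> x_j) = \<epsilon>(x_i)\<epsilon>(x_j)); checked on the basis.\<close>
definition coalg_morph :: "nat \<Rightarrow> (nat \<Rightarrow> nat \<Rightarrow> nat \<Rightarrow> 'a::comm_ring_1) \<Rightarrow> bool" where
  "coalg_morph n F \<longleftrightarrow>
    (\<forall>i<n. \<forall>j<n.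
       eps (bil n F (bas i) (bas j)) = eps (bas i) * eps (bas j) \<and>
       comul n (bil n F (bas i) (bas j)) =
         (\<lambda>a b. \<Sum>i1\<le>i. \<Sum>j1\<le>j.
            tens (bil n F (bas i1) (bas j1)) (bil n F (bas (i - i1)) (bas (j - j1))) a b))"

text \<open>Regular q-magma coalgebra (C, P, D): P, D coalgebra morphisms and there are coalgebra
  morphisms U (a \<otimes> b \<mapsto> a^b) and L (a \<otimes> b \<mapsto> a_b) with
  a^{b(1)} . b(2) = (a . b(1))^{b(2)} = \<epsilon>(b) a and (a : b(2))_{b(1)} = a_{b(2)} : b(1) = \<epsilon>(b) a.\<close>
definition regular_q_magma :: "nat \<Rightarrow> (nat \<Rightarrow> nat \<Rightarrow> nat \<Rightarrow> 'a::comm_ring_1) \<Rightarrow> (nat \<Rightarrow> nat \<Rightarrow> nat \<Rightarrow> 'a) \<Rightarrow> bool" where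
  "regular_q_magma n P D \<longleftrightarrow> coalg_morph n P \<and> coalg_morph n D \<and>
    (\<exists>U L. coalg_morph n U \<and> coalg_morph n L \<and>
      (\<forall>a\<in>Cvec n. \<forall>b\<in>Cvec n.
         sw n b (\<lambda>b1 b2. bil n P (bil n U a b1) b2) = (\<lambda>k. eps b * a k) \<and>
         sw n b (\<lambda>b1 b2. bil n U (bil n P a b1) b2) = (\<lambda>k. eps b * a k) \<and>
         sw n b (\<lambda>b1 b2. bil n L (bil n D a b2) b1) = (\<lambda>k. eps b * a k) \<and>
         sw n b (\<lambda>b1 b2. bil n D (bil n L a b2) b1) = (\<lambda>k. eps b * a k)))"

definition regular_q_cycle :: "nat \<Rightarrow> (nat \<Rightarrow> nat \<Rightarrow> nat \<Rightarrow> 'a::comm_ring_1) \<Rightarrow> (nat \<Rightarrow> nat \<Rightarrow> nat \<Rightarrow> 'a) \<Rightarrow> bool" where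
  "regular_q_cycle n P D \<longleftrightarrow> regular_q_magma n P D \<and>
    (\<forall>a\<in>Cvec n. \<forall>b\<in>Cvec n. \<forall>c\<in>Cvec n.
       sw n b (\<lambda>b1 b2. bil n P (bil n P a b1) (bil n D c b2)) =
         sw n c (\<lambda>c1 c2. bil n P (bil n P a c2) (bil n P b c1)) \<and>
       sw n b (\<lambda>b1 b2. bil n D (bil n P a b1) (bil n P c b2)) =
         sw n c (\<lambda>c1 c2. bil n P (bil n D a c2) (bil n D b c1)) \<and>
       sw n b (\<lambda>b1 b2. bil n D (bil n D a b1) (bil n D c b2)) =
         sw n c (\<lambda>c1 c2. bil n D (bil n D a c2) (bil n P b c1)))"

end

theory Submission
  imports Defs
begin

text \<open>A coalgebra morphism \<open>F : C \<otimes> C \<rightarrow> C\<close> is determined by its degree-one coefficients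
  \<open>F i j 1\<close>: comultiplicativity gives \<open>F i j (s + 1) = \<Sum> F i\<^sub>1 j\<^sub>1 1 * F (i - i\<^sub>1) (j - j\<^sub>1) s\<close>, and
  the same sum must vanish for \<open>s = n - 1\<close>. This nilpotency forces \<open>F 0 0 1 = 0\<close> and, in
  characteristic \<open>0\<close>, also \<open>F 0 v 1 = 0\<close> as soon as \<open>F 1 0 1 \<noteq> 0\<close>. Regularity gives
  \<open>P 1 0 1 \<noteq> 0\<close> and \<open>D 1 0 1 \<noteq> 0\<close>, and identity (1) then makes \<open>x\<^sub>0\<close> a right unit of both
  operations. Finally \<open>P\<close> and \<open>D\<close> agree in degree one by induction on \<open>i + k\<close>: subtracting (3)
  from (1) at \<open>(x\<^sub>i, x\<^sub>1, x\<^sub>k)\<close> leaves \<open>(i + k - 1) P 1 1 1 (P i k 1 - D i k 1) = 0\<close> for \<open>k \<ge> 2\<close>,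
  and two instances of (1) give \<open>D i 1 1 - P i 1 1 = P 1 i 1 - D 1 i 1\<close>, which settles \<open>k = 1\<close>.\<close>

declare One_nat_def [simp del]

lemma sum_eq_single:
  assumes "finite A" "a \<in> A" "\<And>x. x \<in> A \<Longrightarrow> x \<noteq> a \<Longrightarrow> f x = 0"
  shows "sum f A = f a"
  using assms by (simp add: sum.remove sum.neutral)

lemma sum_eq_two:
  assumes "finite A" "a \<in> A" "b \<in> A" "a \<noteq> b" "\<And>x. x \<in> A \<Longrightarrow> x \<noteq> a \<Longrightarrow> x \<noteq> b \<Longrightarrow> f x = 0"
  shows "sum f A = f a + f b"
proof -
  have "sum f A = f a + sum f (A - {a})" using assms by (simp add: sum.remove)
  also have "sum f (A - {a}) = f b" using assms by (intro sum_eq_single) auto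
  finally show ?thesis .
qed

lemma sum_atMost_1: "(\<Sum>j\<le>(1::nat). f j) = f 0 + f 1"
  by (simp add: atMost_Suc One_nat_def add.commute)

lemma bas_in_Cvec: "i < n \<Longrightarrow> bas i \<in> Cvec n"
  by (simp add: Cvec_def bas_def)

lemma bil_bas_bas:
  "i < n \<Longrightarrow> j < n \<Longrightarrow> bil n F (bas i) (bas j) = (\<lambda>k. if k < n then F i j k else 0)"
  by (rule ext)
    (simp add: bil_def bas_def if_distrib[of "\<lambda>x. x * _"] if_distrib[of "\<lambda>x. _ * x"] cong: if_cong)

lemma bil_bil_bas:
  "\<lbrakk>i < n; j < n; j' < n; l < n\<rbrakk> \<Longrightarrow>
    bil n F (bil n G (bas i) (bas j)) (bas j') l = (\<Sum>s<n. G i j s * F s j' l)"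
  by (simp add: bil_def[of n F] bil_bas_bas bas_def[of j'] if_distrib[of "\<lambda>x. x * _"]
      if_distrib[of "\<lambda>x. _ * x"] cong: if_cong)

lemma bil_bil_bil_bas:
  "\<lbrakk>i < n; j < n; i' < n; j' < n; l < n\<rbrakk> \<Longrightarrow>
    bil n F (bil n G (bas i) (bas j)) (bil n H (bas i') (bas j')) l =
      (\<Sum>s<n. \<Sum>t<n. G i j s * H i' j' t * F s t l)"
  by (simp add: bil_def[of n F] bil_bas_bas)

lemma sw_bas: "j < n \<Longrightarrow> sw n (bas j) G k = (\<Sum>j1\<le>j. G (bas j1) (bas (j - j1)) k)"
  by (simp add: sw_def bas_def if_distrib[of "\<lambda>x. x * _"] cong: if_cong)

text \<open>\<open>conv F a b i j\<close> is the coefficient of \<open>(x\<^sub>a \<otimes> x\<^sub>b)\<close> in \<open>(F \<otimes> F)(\<Delta>(x\<^sub>i \<otimes> x\<^sub>j))\<close>.\<close>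

definition conv :: "(nat \<Rightarrow> nat \<Rightarrow> nat \<Rightarrow> 'a::comm_ring_1) \<Rightarrow> nat \<Rightarrow> nat \<Rightarrow> nat \<Rightarrow> nat \<Rightarrow> 'a" where
  "conv F a b i j = (\<Sum>i1\<le>i. \<Sum>j1\<le>j. F i1 j1 a * F (i - i1) (j - j1) b)"

locale coalg_morph_coeffs =
  fixes n :: nat and F :: "nat \<Rightarrow> nat \<Rightarrow> nat \<Rightarrow> 'a::{idom, ring_char_0}"
  assumes coalg_morph: "coalg_morph n F" and two_le_n: "2 \<le> n"
begin

lemma counit_coeff: "i < n \<Longrightarrow> j < n \<Longrightarrow> F i j 0 = (if i = 0 \<and> j = 0 then 1 else 0)"
proof -
  assume "i < n" "j < n"
  then have "eps (bil n F (bas i) (bas j)) = eps (bas i) * eps (bas j)"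
    using coalg_morph unfolding coalg_morph_def by blast
  with \<open>i < n\<close> \<open>j < n\<close> two_le_n have "F i j 0 = bas i 0 * bas j 0"
    by (simp add: bil_bas_bas eps_def)
  then show ?thesis by (simp add: bas_def)
qed

lemma comult_coeff:
  assumes "i < n" "j < n" "a < n" "b < n"
  shows "(if a + b < n then F i j (a + b) else 0) = conv F a b i j"
proof -
  have "comul n (bil n F (bas i) (bas j)) a b = (\<Sum>i1\<le>i. \<Sum>j1\<le>j.
          tens (bil n F (bas i1) (bas j1)) (bil n F (bas (i - i1)) (bas (j - j1))) a b)"
    using coalg_morph assms unfolding coalg_morph_def by simp
  moreover have "comul n (bil n F (bas i) (bas j)) a b = (if a + b < n then F i j (a + b) else 0)"
    using assms by (simp add: comul_def bil_bas_bas)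
  ultimately show ?thesis
    using assms by (simp add: tens_def bil_bas_bas conv_def)
qed

lemma coeff_Suc: "i < n \<Longrightarrow> j < n \<Longrightarrow> Suc s < n \<Longrightarrow> F i j (Suc s) = conv F 1 s i j"
  using comult_coeff[of i j 1 s] by (simp add: Suc_eq_plus1_left)

lemma conv_1_top: "i < n \<Longrightarrow> j < n \<Longrightarrow> conv F 1 (n - 1) i j = 0"
  using comult_coeff[of i j 1 "n - 1"] two_le_n by simp

lemma coeff_00_power: "t < n \<Longrightarrow> F 0 0 t = F 0 0 1 ^ t"
proof (induction t)
  case 0
  then show ?case by (simp add: counit_coeff)
next
  case (Suc t)
  then have "F 0 0 (Suc t) = conv F 1 t 0 0"
    using two_le_n by (simp add: coeff_Suc)
  with Suc show ?case by (simp add: conv_def)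
qed

lemma coeff_001_eq_0: "F 0 0 1 = 0"
proof -
  have "F 0 0 1 ^ Suc (n - 1) = F 0 0 1 * F 0 0 (n - 1)"
    unfolding power_Suc using coeff_00_power[of "n - 1"] two_le_n by simp
  also have "\<dots> = 0"
    using conv_1_top[of 0 0] two_le_n by (simp add: conv_def)
  finally show ?thesis by (simp only: power_eq_0_iff)
qed

lemma coeff_eq_0_below_upto:
  assumes coeff_0w1: "\<And>w. w < s \<Longrightarrow> F 0 w 1 = 0"
  shows "\<lbrakk>t < n; u < n; v < n; u < t; v < s\<rbrakk> \<Longrightarrow> F u v t = 0"
proof (induction t arbitrary: u v)
  case 0
  then show ?case by simp
next
  case (Suc t)
  have "F u v (Suc t) = conv F 1 t u v"
    using Suc.prems by (simp add: coeff_Suc)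
  also have "\<dots> = 0"
    unfolding conv_def
  proof (intro sum.neutral ballI)
    fix i1 j1
    assume "i1 \<in> {..u}" "j1 \<in> {..v}"
    then show "F i1 j1 1 * F (u - i1) (v - j1) t = 0"
      using Suc coeff_0w1 by (cases "i1 = 0") auto
  qed
  finally show ?case .
qed

lemma coeff_u0_eq_0: "t < n \<Longrightarrow> u < t \<Longrightarrow> F u 0 t = 0"
  using coeff_eq_0_below_upto[of 1 t u 0] coeff_001_eq_0 two_le_n by simp

lemma coeff_10: "s < n \<Longrightarrow> F 1 0 s = (if s = 1 then F 1 0 1 else 0)"
  using counit_coeff[of 1 0] coeff_u0_eq_0[of s 1] two_le_n by (cases "s = 0") auto

lemma coeff_t0t: "t < n \<Longrightarrow> F t 0 t = F 1 0 1 ^ t"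
proof (induction t)
  case 0
  then show ?case by (simp add: counit_coeff)
next
  case (Suc t)
  have "F (Suc t) 0 (Suc t) = (\<Sum>x\<le>Suc t. F x 0 1 * F (Suc t - x) 0 t)"
    using Suc.prems two_le_n by (simp add: coeff_Suc conv_def)
  also have "\<dots> = F 1 0 1 * F (Suc t - 1) 0 t"
  proof (rule sum_eq_single)
    fix x
    assume "x \<in> {..Suc t}" "x \<noteq> 1"
    then show "F x 0 1 * F (Suc t - x) 0 t = 0"
      using Suc.prems coeff_001_eq_0 coeff_u0_eq_0[of t "Suc t - x"] by (cases "x = 0") auto
  qed auto
  finally show ?case
    using Suc by simp
qed

context
  fixes s :: nat
  assumes s_pos: "0 < s" and s_less_n: "s < n" and coeff_0w1: "\<And>w. w < s \<Longrightarrow> F 0 w 1 = 0"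
begin

lemma coeff_eq_0_far_below: "\<lbrakk>t < n; u < n; v \<le> s; u + 1 < t\<rbrakk> \<Longrightarrow> F u v t = 0"
proof (induction t arbitrary: u v)
  case 0
  then show ?case by simp
next
  case (Suc t)
  have "F u v (Suc t) = conv F 1 t u v"
    using Suc.prems s_less_n by (simp add: coeff_Suc)
  also have "\<dots> = 0"
    unfolding conv_def
  proof (intro sum.neutral ballI)
    fix i1 j1
    assume ij: "i1 \<in> {..u}" "j1 \<in> {..v}"
    show "F i1 j1 1 * F (u - i1) (v - j1) t = 0"
    proof (cases "i1 = 0")
      case True
      with ij Suc.prems show ?thesis
        using coeff_0w1[of j1] coeff_u0_eq_0[of t u] by (cases "j1 < s") auto
    next
      case False
      with ij Suc show ?thesis by auto
    qed
  qed
  finally show ?case .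
qed

lemma conv_1_diag: "t < n \<Longrightarrow> conv F 1 t t s = of_nat (Suc t) * F 1 0 1 ^ t * F 0 s 1"
proof (induction t)
  case 0
  have "conv F 1 0 0 s = (\<Sum>j1\<le>s. F 0 j1 1 * F 0 (s - j1) 0)"
    by (simp add: conv_def)
  also have "\<dots> = F 0 s 1 * F 0 (s - s) 0"
    by (rule sum_eq_single) (auto simp: coeff_0w1)
  finally show ?case
    using s_less_n by (simp add: counit_coeff)
next
  case (Suc t)
  define g where "g i1 = (\<Sum>j1\<le>s. F i1 j1 1 * F (Suc t - i1) (s - j1) (Suc t))" for i1
  have "g 0 = F 0 s 1 * F (Suc t - 0) (s - s) (Suc t)"
    unfolding g_def by (rule sum_eq_single) (auto simp: coeff_0w1)
  then have g0: "g 0 = F 0 s 1 * F 1 0 1 ^ Suc t"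
    using coeff_t0t[of "Suc t"] Suc.prems by simp
  have "g 1 = F 1 0 1 * F (Suc t - 1) (s - 0) (Suc t)"
    unfolding g_def
  proof (rule sum_eq_single)
    fix j1
    assume "j1 \<in> {..s}" "j1 \<noteq> 0"
    then show "F 1 j1 1 * F (Suc t - 1) (s - j1) (Suc t) = 0"
      using Suc.prems s_less_n coeff_eq_0_below_upto[of s "Suc t" t "s - j1", OF coeff_0w1] by simp
  qed auto
  then have g1: "g 1 = F 1 0 1 * (of_nat (Suc t) * F 1 0 1 ^ t * F 0 s 1)"
    using Suc s_less_n by (simp add: coeff_Suc)
  have "conv F 1 (Suc t) (Suc t) s = g 0 + g 1"
    unfolding conv_def g_def[symmetric]
  proof (rule sum_eq_two)
    fix i1
    assume "i1 \<in> {..Suc t}" "i1 \<noteq> 0" "i1 \<noteq> 1"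
    then have "F (Suc t - i1) (s - j1) (Suc t) = 0" for j1
      using Suc.prems s_less_n by (intro coeff_eq_0_far_below) auto
    then show "g i1 = 0"
      by (simp add: g_def)
  qed auto
  then show ?case
    using g0 g1 by (simp add: algebra_simps)
qed

lemma coeff_0s1_eq_0:
  assumes "F 1 0 1 \<noteq> 0"
  shows "F 0 s 1 = 0"
proof -
  have "of_nat n * F 1 0 1 ^ (n - 1) * F 0 s 1 = 0"
    using conv_1_diag[of "n - 1"] conv_1_top[of "n - 1" s] two_le_n s_less_n by simp
  with assms two_le_n show ?thesis by simp
qed

end

lemma coeff_0v1_eq_0:
  assumes "F 1 0 1 \<noteq> 0"
  shows "v < n \<Longrightarrow> F 0 v 1 = 0"
proof (induction v rule: less_induct)
  case (less v)
  then show ?case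
    using coeff_001_eq_0 coeff_0s1_eq_0[OF _ _ _ assms, of v] by (cases "v = 0") auto
qed

lemma coeff_u0_eq_delta_below:
  assumes "2 \<le> m" and coeff_u01: "\<And>u. u < m \<Longrightarrow> u < n \<Longrightarrow> F u 0 1 = (if u = 1 then 1 else 0)"
  shows "\<lbrakk>0 < t; t < n; u < n; u + 1 < m + t\<rbrakk> \<Longrightarrow> F u 0 t = (if u = t then 1 else 0)"
proof (induction t arbitrary: u)
  case 0
  then show ?case by simp
next
  case (Suc t)
  show ?case
  proof (cases "t = 0")
    case True
    with Suc.prems coeff_u01 show ?thesis by (simp add: One_nat_def)
  next
    case t_pos: False
    have "F u 0 (Suc t) = (\<Sum>x\<le>u. F x 0 1 * F (u - x) 0 t)"
      using Suc.prems two_le_n by (simp add: coeff_Suc conv_def)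
    also have "\<dots> = (if u = Suc t then 1 else 0)"
    proof (cases "u = 0")
      case True
      then show ?thesis by (simp add: coeff_001_eq_0)
    next
      case False
      have "(\<Sum>x\<le>u. F x 0 1 * F (u - x) 0 t) = F 1 0 1 * F (u - 1) 0 t"
      proof (rule sum_eq_single)
        fix x
        assume "x \<in> {..u}" "x \<noteq> 1"
        then show "F x 0 1 * F (u - x) 0 t = 0"
          using Suc.prems coeff_u01[of x] coeff_u0_eq_0[of t "u - x"] by (cases "x < m") auto
      qed (use False in auto)
      also have "\<dots> = (if u = Suc t then 1 else 0)"
        using coeff_u01[of 1] assms(1) two_le_n Suc t_pos False by auto
      finally show ?thesis .
    qed
    finally show ?thesis .
  qed
qed

text \<open>Induction on \<open>u\<close>: once \<open>F u' 0 1 = [u' = 1]\<close> for \<open>u' < u\<close>, the fixed-point equation for \<open>u\<close>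
  reads \<open>F u 0 1 * q 1 + q u = q u\<close>.\<close>

lemma coeff_u01_eq_delta_if_fixed:
  assumes q1: "q 1 \<noteq> 0" and fixed: "\<And>m. m < n \<Longrightarrow> (\<Sum>t<n. F m 0 t * q t) = q m"
  shows "u < n \<Longrightarrow> F u 0 1 = (if u = 1 then 1 else 0)"
proof (induction u rule: less_induct)
  case (less m)
  consider "m = 0" | "m = 1" | "2 \<le> m" by linarith
  then show ?case
  proof cases
    case 1
    then show ?thesis by (simp add: coeff_001_eq_0)
  next
    case 2
    have "(\<Sum>t<n. F 1 0 t * q t) = F 1 0 1 * q 1"
      by (rule sum_eq_single) (use coeff_10 two_le_n in auto)
    with fixed[of 1] two_le_n q1 2 show ?thesis by simp
  next
    case 3
    have "(\<Sum>t<n. F m 0 t * q t) = F m 0 1 * q 1 + F m 0 m * q m"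
    proof (rule sum_eq_two)
      fix t
      assume "t \<in> {..<n}" "t \<noteq> 1" "t \<noteq> m"
      then show "F m 0 t * q t = 0"
        using counit_coeff[of m 0] coeff_u0_eq_delta_below[OF 3 less.IH, of t m] 3 less.prems two_le_n
        by (cases "t = 0") auto
    qed (use 3 less.prems two_le_n in auto)
    moreover have "F m 0 m = 1"
      using coeff_u0_eq_delta_below[OF 3 less.IH, of m m] 3 less.prems by simp
    ultimately have "F m 0 1 * q 1 = 0"
      using fixed[of m] less.prems by simp
    with q1 3 show ?thesis by simp
  qed
qed

end

locale triangular_coalg_morph = coalg_morph_coeffs +
  assumes coeff_0v1: "v < n \<Longrightarrow> F 0 v 1 = 0"
begin

lemma coeff_eq_0_below: "\<lbrakk>t < n; u < n; v < n; u < t\<rbrakk> \<Longrightarrow> F u v t = 0"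
  using coeff_eq_0_below_upto[of n t u v] coeff_0v1 by simp

lemma coeff_1v: "j < n \<Longrightarrow> s < n \<Longrightarrow> F 1 j s = (if s = 1 then F 1 j 1 else 0)"
  using counit_coeff[of 1 j] coeff_eq_0_below[of s 1 j] two_le_n by (cases "s = 0"; cases "s = 1") auto

lemma coeff_0v: "v < n \<Longrightarrow> t < n \<Longrightarrow> F 0 v t = (if t = 0 \<and> v = 0 then 1 else 0)"
  using counit_coeff[of 0 v] coeff_eq_0_below[of t 0 v] by (cases "t = 0") auto

lemma sum_coeff_1v: "j < n \<Longrightarrow> (\<Sum>s<n. F 1 j s * X s) = F 1 j 1 * X 1"
  by (rule sum_eq_single) (use two_le_n coeff_1v in auto)

lemma sum_coeff_0v: "v < n \<Longrightarrow> (\<Sum>t<n. F 0 v t * X t) = (if v = 0 then X 0 else 0)"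
proof -
  assume "v < n"
  then have "(\<Sum>t<n. F 0 v t * X t) = F 0 v 0 * X 0"
    by (intro sum_eq_single) (use two_le_n coeff_0v in auto)
  with \<open>v < n\<close> show ?thesis
    by (simp add: counit_coeff)
qed

end

locale right_unital_coalg_morph = coalg_morph_coeffs +
  assumes coeff_u01: "u < n \<Longrightarrow> F u 0 1 = (if u = 1 then 1 else 0)"
begin

lemma coeff_u0: "t < n \<Longrightarrow> u < n \<Longrightarrow> F u 0 t = (if u = t then 1 else 0)"
  using counit_coeff[of u 0] coeff_u0_eq_delta_below[OF two_le_n coeff_u01, of t u] two_le_n
  by (cases "t = 0") auto

lemma sum_coeff_u0: "u < n \<Longrightarrow> (\<Sum>t<n. F u 0 t * X t) = X u"
proof -
  assume "u < n"
  then have "(\<Sum>t<n. F u 0 t * X t) = F u 0 u * X u"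
    by (intro sum_eq_single) (use coeff_u0 in auto)
  with \<open>u < n\<close> show ?thesis
    by (simp add: coeff_u0)
qed

lemma coeff_t1t: "t < n \<Longrightarrow> F t 1 t = of_nat t * F 1 1 1"
proof (induction t)
  case 0
  then show ?case using two_le_n by (simp add: counit_coeff)
next
  case (Suc t)
  have "F (Suc t) 1 (Suc t) =
      (\<Sum>x\<le>Suc t. F x 0 1 * F (Suc t - x) 1 t) + (\<Sum>x\<le>Suc t. F x 1 1 * F (Suc t - x) 0 t)"
    using Suc.prems two_le_n by (simp add: coeff_Suc conv_def sum_atMost_1 sum.distrib)
  also have "(\<Sum>x\<le>Suc t. F x 0 1 * F (Suc t - x) 1 t) = F 1 0 1 * F (Suc t - 1) 1 t"
    by (rule sum_eq_single) (use Suc.prems coeff_u01 in auto)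
  also have "(\<Sum>x\<le>Suc t. F x 1 1 * F (Suc t - x) 0 t) = F 1 1 1 * F (Suc t - 1) 0 t"
    by (rule sum_eq_single) (use Suc.prems coeff_u0 in auto)
  finally show ?case
    using Suc coeff_u01[of 1] coeff_u0[of t t] two_le_n by (simp add: algebra_simps)
qed

end

locale regular_q_cycle_coalg =
  fixes n :: nat and P D :: "nat \<Rightarrow> nat \<Rightarrow> nat \<Rightarrow> 'a::{idom, ring_char_0}"
  assumes two_le_n: "2 \<le> n" and regular: "regular_q_cycle n P D" and P_111: "P 1 1 1 \<noteq> 0"
begin

lemma regular_magma: "regular_q_magma n P D"
  using regular by (simp add: regular_q_cycle_def)

sublocale P: coalg_morph_coeffs n P
  using regular_magma two_le_n by unfold_locales (simp_all add: regular_q_magma_def)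

sublocale D: coalg_morph_coeffs n D
  using regular_magma two_le_n by unfold_locales (simp_all add: regular_q_magma_def)

lemma cycle_1_bas:
  assumes "i < n" "j < n" "k < n" "l < n"
  shows "(\<Sum>j1\<le>j. \<Sum>s<n. \<Sum>t<n. P i j1 s * D k (j - j1) t * P s t l) =
         (\<Sum>k1\<le>k. \<Sum>s<n. \<Sum>t<n. P i (k - k1) s * P j k1 t * P s t l)"
proof -
  have "sw n (bas j) (\<lambda>b1 b2. bil n P (bil n P (bas i) b1) (bil n D (bas k) b2)) l =
        sw n (bas k) (\<lambda>c1 c2. bil n P (bil n P (bas i) c2) (bil n P (bas j) c1)) l"
    using regular assms bas_in_Cvec unfolding regular_q_cycle_def by metis
  with assms show ?thesis
    by (simp add: sw_bas bil_bil_bil_bas)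
qed

lemma cycle_3_bas:
  assumes "i < n" "j < n" "k < n" "l < n"
  shows "(\<Sum>j1\<le>j. \<Sum>s<n. \<Sum>t<n. D i j1 s * D k (j - j1) t * D s t l) =
         (\<Sum>k1\<le>k. \<Sum>s<n. \<Sum>t<n. D i (k - k1) s * P j k1 t * D s t l)"
proof -
  have "sw n (bas j) (\<lambda>b1 b2. bil n D (bil n D (bas i) b1) (bil n D (bas k) b2)) l =
        sw n (bas k) (\<lambda>c1 c2. bil n D (bil n D (bas i) c2) (bil n P (bas j) c1)) l"
    using regular assms bas_in_Cvec unfolding regular_q_cycle_def by metis
  with assms show ?thesis
    by (simp add: sw_bas bil_bil_bil_bas)
qed

lemma P_101_ne_0: "P 1 0 1 \<noteq> 0" and D_101_ne_0: "D 1 0 1 \<noteq> 0"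
proof -
  obtain U L where "coalg_morph n U" "coalg_morph n L" and
    inverse: "\<forall>a\<in>Cvec n. \<forall>b\<in>Cvec n.
         sw n b (\<lambda>b1 b2. bil n P (bil n U a b1) b2) = (\<lambda>k. eps b * a k) \<and>
         sw n b (\<lambda>b1 b2. bil n U (bil n P a b1) b2) = (\<lambda>k. eps b * a k) \<and>
         sw n b (\<lambda>b1 b2. bil n L (bil n D a b2) b1) = (\<lambda>k. eps b * a k) \<and>
         sw n b (\<lambda>b1 b2. bil n D (bil n L a b2) b1) = (\<lambda>k. eps b * a k)"
    using regular_magma unfolding regular_q_magma_def by blast
  then interpret U: coalg_morph_coeffs n U + L: coalg_morph_coeffs n L
    using two_le_n by unfold_locales
  have n: "0 < n" "1 < n"
    using two_le_n by auto
  have "sw n (bas 0) (\<lambda>b1 b2. bil n P (bil n U (bas 1) b1) b2) 1 = eps (bas 0) * bas 1 1"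
    using inverse bas_in_Cvec[OF n(1)] bas_in_Cvec[OF n(2)] by metis
  moreover have "eps (bas 0) * bas 1 1 = (1::'a)"
    by (simp add: eps_def bas_def)
  moreover have "(\<Sum>s<n. U 1 0 s * P s 0 1) = U 1 0 1 * P 1 0 1"
    by (rule sum_eq_single) (use n U.coeff_10 in auto)
  ultimately have "U 1 0 1 * P 1 0 1 = 1"
    using n by (simp add: sw_bas bil_bil_bas)
  then show "P 1 0 1 \<noteq> 0" by auto
  have "sw n (bas 0) (\<lambda>b1 b2. bil n L (bil n D (bas 1) b2) b1) 1 = eps (bas 0) * bas 1 1"
    using inverse bas_in_Cvec[OF n(1)] bas_in_Cvec[OF n(2)] by metis
  moreover have "eps (bas 0) * bas 1 1 = (1::'a)"
    by (simp add: eps_def bas_def)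
  moreover have "(\<Sum>s<n. D 1 0 s * L s 0 1) = D 1 0 1 * L 1 0 1"
    by (rule sum_eq_single) (use n D.coeff_10 in auto)
  ultimately have "D 1 0 1 * L 1 0 1 = 1"
    using n by (simp add: sw_bas bil_bil_bas)
  then show "D 1 0 1 \<noteq> 0" by auto
qed

sublocale P: triangular_coalg_morph n P
  using P.coeff_0v1_eq_0[OF P_101_ne_0] by unfold_locales

sublocale D: triangular_coalg_morph n D
  using D.coeff_0v1_eq_0[OF D_101_ne_0] by unfold_locales

text \<open>Identity (1) for \<open>(x\<^sub>1, x\<^sub>m, x\<^sub>0)\<close> and for \<open>(x\<^sub>1, x\<^sub>0, x\<^sub>m)\<close> says that the vector
  \<open>t \<mapsto> P 1 t 1\<close> is fixed by \<open>a \<mapsto> a \<cdot> x\<^sub>0\<close> and by \<open>a \<mapsto> a : x\<^sub>0\<close>.\<close>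

lemma P_u01: "u < n \<Longrightarrow> P u 0 1 = (if u = 1 then 1 else 0)"
proof (rule P.coeff_u01_eq_delta_if_fixed[where q = "\<lambda>t. P 1 t 1"])
  show "P 1 1 1 \<noteq> 0" by (rule P_111)
  fix m
  assume m: "m < n"
  have n1: "1 < n" using two_le_n by simp
  have "(\<Sum>j1\<le>m. \<Sum>s<n. \<Sum>t<n. P 1 j1 s * D 0 (m - j1) t * P s t 1) =
        (\<Sum>j1\<le>m. P 1 j1 1 * (\<Sum>t<n. D 0 (m - j1) t * P 1 t 1))"
    using m by (simp add: mult.assoc sum_distrib_left[symmetric] P.sum_coeff_1v)
  also have "\<dots> = P 1 m 1 * (\<Sum>t<n. D 0 (m - m) t * P 1 t 1)"
    by (rule sum_eq_single) (use m D.sum_coeff_0v in auto)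
  also have "\<dots> = P 1 m 1 * P 1 0 1"
    using D.sum_coeff_0v[of 0] n1 by simp
  finally have "P 1 m 1 * P 1 0 1 = P 1 0 1 * (\<Sum>t<n. P m 0 t * P 1 t 1)"
    using cycle_1_bas[of 1 m 0 1] m n1
    by (simp add: mult.assoc sum_distrib_left[symmetric] P.sum_coeff_1v)
  with P_101_ne_0 show "(\<Sum>t<n. P m 0 t * P 1 t 1) = P 1 m 1"
    by (simp add: mult.commute)
qed

lemma D_u01: "u < n \<Longrightarrow> D u 0 1 = (if u = 1 then 1 else 0)"
proof (rule D.coeff_u01_eq_delta_if_fixed[where q = "\<lambda>t. P 1 t 1"])
  show "P 1 1 1 \<noteq> 0" by (rule P_111)
  fix m
  assume m: "m < n"
  have n1: "1 < n" using two_le_n by simp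
  have "(\<Sum>k1\<le>m. \<Sum>s<n. \<Sum>t<n. P 1 (m - k1) s * P 0 k1 t * P s t 1) =
        (\<Sum>k1\<le>m. P 1 (m - k1) 1 * (\<Sum>t<n. P 0 k1 t * P 1 t 1))"
    using m by (simp add: mult.assoc sum_distrib_left[symmetric] P.sum_coeff_1v)
  also have "\<dots> = P 1 (m - 0) 1 * (\<Sum>t<n. P 0 0 t * P 1 t 1)"
    by (rule sum_eq_single) (use m P.sum_coeff_0v in auto)
  also have "\<dots> = P 1 m 1 * P 1 0 1"
    using P.sum_coeff_0v[of 0] n1 by simp
  finally have "P 1 0 1 * (\<Sum>t<n. D m 0 t * P 1 t 1) = P 1 m 1 * P 1 0 1"
    using cycle_1_bas[of 1 0 m 1] m n1
    by (simp add: mult.assoc sum_distrib_left[symmetric] P.sum_coeff_1v)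
  with P_101_ne_0 show "(\<Sum>t<n. D m 0 t * P 1 t 1) = P 1 m 1"
    by (simp add: mult.commute)
qed

sublocale P: right_unital_coalg_morph n P
  using P_u01 by unfold_locales

sublocale D: right_unital_coalg_morph n D
  using D_u01 by unfold_locales

lemma cycle_1_reduced:
  assumes "i < n" "k < n"
  shows "(\<Sum>t<n. D k 1 t * P i t 1) + (\<Sum>s<n. P i 1 s * P s k 1) =
    (\<Sum>k1\<le>k. \<Sum>s<n. P i (k - k1) s * (P 1 k1 1 * P s 1 1))"
  using cycle_1_bas[of i 1 k 1] assms two_le_n
  by (simp add: sum_atMost_1 mult.assoc sum_distrib_left[symmetric]
      P.sum_coeff_u0 D.sum_coeff_u0 P.sum_coeff_1v)

lemma cycle_3_reduced:
  assumes "i < n" "k < n"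
  shows "(\<Sum>t<n. D k 1 t * D i t 1) + (\<Sum>s<n. D i 1 s * D s k 1) =
    (\<Sum>k1\<le>k. \<Sum>s<n. D i (k - k1) s * (P 1 k1 1 * D s 1 1))"
  using cycle_3_bas[of i 1 k 1] assms two_le_n
  by (simp add: sum_atMost_1 mult.assoc sum_distrib_left[symmetric] D.sum_coeff_u0 P.sum_coeff_1v)

context
  fixes m :: nat
  assumes deg1_below: "\<And>u v. u < n \<Longrightarrow> v < n \<Longrightarrow> u + v < m \<Longrightarrow> D u v 1 = P u v 1"
begin

lemma D_eq_P_below: "\<lbrakk>0 < s; s < n; u < n; v < n; u + v + 1 < m + s\<rbrakk> \<Longrightarrow> D u v s = P u v s"
proof (induction s arbitrary: u v)
  case 0
  then show ?case by simp
next
  case (Suc s)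
  show ?case
  proof (cases "s = 0")
    case True
    with Suc.prems deg1_below show ?thesis by (simp add: One_nat_def[symmetric])
  next
    case s_pos: False
    have "conv D 1 s u v = conv P 1 s u v"
      unfolding conv_def
    proof (intro sum.cong refl)
      fix i1 j1
      assume ij: "i1 \<in> {..u}" "j1 \<in> {..v}"
      show "D i1 j1 1 * D (u - i1) (v - j1) s = P i1 j1 1 * P (u - i1) (v - j1) s"
      proof (cases "i1 + j1 < m")
        case True
        then have "D i1 j1 1 = P i1 j1 1"
          using deg1_below ij Suc.prems by simp
        moreover have "D (u - i1) (v - j1) s = P (u - i1) (v - j1) s" if "0 < i1 + j1"
          using Suc.IH[of "u - i1" "v - j1"] ij Suc.prems s_pos that by auto
        ultimately show ?thesis
          using P.coeff_001_eq_0 D.coeff_001_eq_0 by (cases "i1 + j1 = 0") auto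
      next
        case False
        then have "u - i1 < s"
          using ij Suc.prems by auto
        then show ?thesis
          using P.coeff_eq_0_below[of s "u - i1" "v - j1"] D.coeff_eq_0_below[of s "u - i1" "v - j1"]
            ij Suc.prems by simp
      qed
    qed
    with Suc.prems show ?thesis
      by (simp add: P.coeff_Suc D.coeff_Suc)
  qed
qed

text \<open>Below total degree \<open>i + k\<close>, every term of the difference of (1) and (3) at
  \<open>(x\<^sub>i, x\<^sub>1, x\<^sub>k)\<close> cancels except those containing \<open>P i k 1\<close> or \<open>D i k 1\<close>.\<close>

context
  fixes i k :: nat
  assumes i_pos: "0 < i" and two_le_k: "2 \<le> k" and i_plus_k: "i + k = m"
    and i_less_n: "i < n" and k_less_n: "k < n"
begin

lemma cycle_13_diff_lhs1:
  "(\<Sum>t<n. D k 1 t * P i t 1) - (\<Sum>t<n. D k 1 t * D i t 1) = D k 1 k * (P i k 1 - D i k 1)"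
proof -
  have "(\<Sum>t<n. D k 1 t * P i t 1) - (\<Sum>t<n. D k 1 t * D i t 1) =
      (\<Sum>t<n. D k 1 t * (P i t 1 - D i t 1))"
    by (simp add: sum_subtractf algebra_simps)
  also have "\<dots> = D k 1 k * (P i k 1 - D i k 1)"
  proof (rule sum_eq_single)
    fix t
    assume t: "t \<in> {..<n}" "t \<noteq> k"
    show "D k 1 t * (P i t 1 - D i t 1) = 0"
    proof (cases "t < k")
      case True
      then show ?thesis using deg1_below[of i t] t i_less_n i_plus_k by simp
    next
      case False
      then show ?thesis using D.coeff_eq_0_below[of t k 1] t k_less_n two_le_n by simp
    qed
  qed (use k_less_n in auto)
  finally show ?thesis .
qed

lemma cycle_13_diff_lhs2:
  "(\<Sum>s<n. P i 1 s * P s k 1) - (\<Sum>s<n. D i 1 s * D s k 1) = P i 1 i * P i k 1 - D i 1 i * D i k 1"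
proof -
  have "(\<Sum>s<n. P i 1 s * P s k 1) - (\<Sum>s<n. D i 1 s * D s k 1) =
      (\<Sum>s<n. P i 1 s * P s k 1 - D i 1 s * D s k 1)"
    by (simp add: sum_subtractf)
  also have "\<dots> = P i 1 i * P i k 1 - D i 1 i * D i k 1"
  proof (rule sum_eq_single)
    fix s
    assume s: "s \<in> {..<n}" "s \<noteq> i"
    consider "s = 0" | "0 < s" "s < i" | "i < s"
      using s by linarith
    then show "P i 1 s * P s k 1 - D i 1 s * D s k 1 = 0"
    proof cases
      case 1
      then show ?thesis using P.counit_coeff[of i 1] D.counit_coeff[of i 1] i_pos i_less_n two_le_n by simp
    next
      case 2
      then have "D i 1 s = P i 1 s" "D s k 1 = P s k 1"
        using D_eq_P_below[of s i 1] deg1_below[of s k] s i_less_n k_less_n i_plus_k two_le_k two_le_n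
        by auto
      then show ?thesis by simp
    next
      case 3
      then show ?thesis
        using P.coeff_eq_0_below[of s i 1] D.coeff_eq_0_below[of s i 1] s i_less_n two_le_n by simp
    qed
  qed (use i_less_n in auto)
  finally show ?thesis .
qed

lemma cycle_13_diff_rhs:
  "(\<Sum>k1\<le>k. \<Sum>s<n. P i (k - k1) s * (P 1 k1 1 * P s 1 1)) -
     (\<Sum>k1\<le>k. \<Sum>s<n. D i (k - k1) s * (P 1 k1 1 * D s 1 1)) =
   P i k 1 * P 1 1 1 - D i k 1 * D 1 1 1"
proof -
  define \<delta> where "\<delta> k1 s = P i (k - k1) s * (P 1 k1 1 * P s 1 1) - D i (k - k1) s * (P 1 k1 1 * D s 1 1)"
    for k1 s
  have \<delta>_0: "\<delta> k1 s = 0" if "k1 \<le> k" "s < n" "k1 \<noteq> 0 \<or> s \<noteq> 1" for k1 s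
  proof (cases "s = 0")
    case True
    then show ?thesis
      using P.counit_coeff[of i "k - k1"] D.counit_coeff[of i "k - k1"] i_pos i_less_n k_less_n by (simp add: \<delta>_def)
  next
    case False
    then have "D i (k - k1) s = P i (k - k1) s"
      using D_eq_P_below[of s i "k - k1"] that i_less_n k_less_n i_plus_k by auto
    moreover have "D s 1 1 = P s 1 1" if "s \<le> i"
      using deg1_below[of s 1] that \<open>s < n\<close> i_plus_k two_le_k two_le_n by simp
    moreover have "P i (k - k1) s = 0" if "i < s"
      using P.coeff_eq_0_below[of s i "k - k1"] that \<open>s < n\<close> i_less_n k_less_n by simp
    ultimately show ?thesis
      by (cases "s \<le> i") (auto simp: \<delta>_def)
  qed
  have "(\<Sum>k1\<le>k. \<Sum>s<n. P i (k - k1) s * (P 1 k1 1 * P s 1 1)) -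
      (\<Sum>k1\<le>k. \<Sum>s<n. D i (k - k1) s * (P 1 k1 1 * D s 1 1)) = (\<Sum>k1\<le>k. \<Sum>s<n. \<delta> k1 s)"
    by (simp add: \<delta>_def sum_subtractf)
  also have "\<dots> = (\<Sum>s<n. \<delta> 0 s)"
    by (rule sum_eq_single) (auto simp: \<delta>_0)
  also have "\<dots> = \<delta> 0 1"
    by (rule sum_eq_single) (use two_le_n \<delta>_0 in auto)
  also have "\<dots> = P i k 1 * P 1 1 1 - D i k 1 * D 1 1 1"
    using P_u01[of 1] two_le_n by (simp add: \<delta>_def)
  finally show ?thesis .
qed

lemma D_eq_P_deg1_step: "D i k 1 = P i k 1"
proof -
  have D_111: "D 1 1 1 = P 1 1 1"
    using deg1_below[of 1 1] i_pos two_le_k i_plus_k two_le_n by simp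
  have "D k 1 k * (P i k 1 - D i k 1) + (P i 1 i * P i k 1 - D i 1 i * D i k 1) =
      P i k 1 * P 1 1 1 - D i k 1 * D 1 1 1"
    unfolding cycle_13_diff_lhs1[symmetric] cycle_13_diff_lhs2[symmetric] cycle_13_diff_rhs[symmetric]
      cycle_1_reduced[OF i_less_n k_less_n, symmetric] cycle_3_reduced[OF i_less_n k_less_n, symmetric]
    by (rule add_diff_add[symmetric])
  moreover have "D k 1 k = of_nat k * P 1 1 1" "P i 1 i = of_nat i * P 1 1 1" "D i 1 i = of_nat i * P 1 1 1"
    using D.coeff_t1t[of k] P.coeff_t1t[of i] D.coeff_t1t[of i] D_111 i_less_n k_less_n by simp_all
  ultimately have "(of_nat i + of_nat k - 1) * P 1 1 1 * (P i k 1 - D i k 1) = 0"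
    using D_111 by (simp add: algebra_simps)
  moreover have "of_nat i + of_nat k - 1 \<noteq> (0::'a)"
  proof -
    have "of_nat i + of_nat k - 1 = (of_nat (i + k - 1) :: 'a)"
      using i_pos by (simp add: of_nat_diff)
    also have "\<dots> \<noteq> 0"
      using i_pos two_le_k by (simp only: of_nat_eq_0_iff)
    finally show ?thesis .
  qed
  ultimately show ?thesis
    using P_111 by simp
qed

end


lemma D_P_deg1_antisym:
  assumes M_pos: "0 < M" and M_less_n: "M < n" and M_plus_1: "M + 1 = m"
  shows "D M 1 1 - P M 1 1 = P 1 M 1 - D 1 M 1"
proof -
  have n1: "1 < n" and P_101: "P 1 0 1 = 1"
    using two_le_n P_u01[of 1] by auto
  define S where "S = (\<Sum>j1\<le>M. P 1 j1 1 * (P 1 (M - j1) 1 * P 1 1 1))"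
  define T where "T = (\<Sum>j1\<le>M. P 1 j1 1 * (D 1 (M - j1) 1 * P 1 1 1))"
  have "(\<Sum>k1\<le>M. P 1 (M - k1) 1 * (P 1 k1 1 * P 1 1 1)) = S"
    unfolding S_def
    by (rule sum.reindex_bij_witness[where i="\<lambda>k. M - k" and j="\<lambda>k. M - k"]) (auto simp: algebra_simps)
  then have cycle_a: "(\<Sum>t<n. D M 1 t * P 1 t 1) + P 1 1 1 * P 1 M 1 = S"
    using cycle_1_reduced[of 1 M] M_less_n n1
    by (simp add: mult.assoc sum_distrib_left[symmetric] P.sum_coeff_1v)
  have cycle_b: "T = P 1 1 1 * P 1 M 1 + (\<Sum>t<n. P M 1 t * P 1 t 1)"
    using cycle_1_bas[of 1 M 1 1] M_less_n n1 P_101 unfolding T_def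
    by (simp add: sum_atMost_1 mult.assoc sum_distrib_left[symmetric] P.sum_coeff_1v D.sum_coeff_1v
        P.sum_coeff_u0)
  have "(\<Sum>t<n. D M 1 t * P 1 t 1) - (\<Sum>t<n. P M 1 t * P 1 t 1) =
      (\<Sum>t<n. (D M 1 t - P M 1 t) * P 1 t 1)"
    by (simp add: sum_subtractf algebra_simps)
  also have "\<dots> = (D M 1 1 - P M 1 1) * P 1 1 1"
  proof (rule sum_eq_single)
    fix t
    assume t: "t \<in> {..<n}" "t \<noteq> 1"
    then show "(D M 1 t - P M 1 t) * P 1 t 1 = 0"
      using P.counit_coeff[of M 1] D.counit_coeff[of M 1] D_eq_P_below[of t M 1] M_pos M_less_n M_plus_1 n1
      by (cases "t = 0") auto
  qed (use n1 in auto)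
  finally have diff_a: "(\<Sum>t<n. D M 1 t * P 1 t 1) - (\<Sum>t<n. P M 1 t * P 1 t 1) =
      (D M 1 1 - P M 1 1) * P 1 1 1" .
  have "T - S = (\<Sum>j1\<le>M. P 1 j1 1 * (D 1 (M - j1) 1 - P 1 (M - j1) 1) * P 1 1 1)"
    unfolding T_def S_def by (simp add: sum_subtractf algebra_simps)
  also have "\<dots> = (D 1 M 1 - P 1 M 1) * P 1 1 1"
    using P_101 by (subst sum_eq_single[where a = 0]) (use deg1_below M_less_n n1 M_plus_1 in auto)
  finally have diff_b: "T - S = (D 1 M 1 - P 1 M 1) * P 1 1 1" .
  have "(D M 1 1 - P M 1 1) * P 1 1 1 = - ((D 1 M 1 - P 1 M 1) * P 1 1 1)"
    unfolding diff_a[symmetric] diff_b[symmetric] cycle_b cycle_a[symmetric] by (simp add: algebra_simps)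
  then have "(D M 1 1 - P M 1 1 - (P 1 M 1 - D 1 M 1)) * P 1 1 1 = 0"
    by (simp add: algebra_simps)
  with P_111 show ?thesis by simp
qed

end


lemma D_eq_P_deg1: "u < n \<Longrightarrow> v < n \<Longrightarrow> D u v 1 = P u v 1"
proof (induction "u + v" arbitrary: u v rule: less_induct)
  case less
  have below: "D u' v' 1 = P u' v' 1" if "u' < n" "v' < n" "u' + v' < u + v" for u' v'
    using less.hyps that by blast
  consider "u = 0" | "v = 0" | "0 < u" "v = 1" | "0 < u" "2 \<le> v"
    by linarith
  then show ?case
  proof cases
    case 1
    with less.prems show ?thesis by (simp add: P.coeff_0v1 D.coeff_0v1)
  next
    case 2
    with less.prems show ?thesis by (simp add: P_u01 D_u01)
  next
    case 3
    have antisym: "D u 1 1 - P u 1 1 = P 1 u 1 - D 1 u 1"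
      using D_P_deg1_antisym[of "u + 1" u] below 3 less.prems by auto
    show ?thesis
    proof (cases "u = 1")
      case True
      with antisym have "2 * (D 1 1 1 - P 1 1 1) = 0"
        by (simp add: algebra_simps)
      with True 3 show ?thesis by simp
    next
      case False
      then have "D 1 u 1 = P 1 u 1"
        using D_eq_P_deg1_step[of "u + 1" 1 u] below 3 less.prems two_le_n by auto
      with antisym 3 show ?thesis by simp
    qed
  next
    case 4
    then show ?thesis
      using D_eq_P_deg1_step[of "u + v" u v] below less.prems by auto
  qed
qed

lemma D_eq_P: "i < n \<Longrightarrow> j < n \<Longrightarrow> k < n \<Longrightarrow> D i j k = P i j k"
  using P.counit_coeff[of i j] D.counit_coeff[of i j] D_eq_P_below[of "2 * n" k i j] D_eq_P_deg1
  by (cases "k = 0") auto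

end

theorem theorem4p4:
  fixes P D :: "nat \<Rightarrow> nat \<Rightarrow> nat \<Rightarrow> 'a::field_char_0" and n :: nat
  assumes "alg_closed_field TYPE('a)"
    and "n \<ge> 2"
    and "regular_q_cycle n P D"
    and "P 1 1 1 \<noteq> 0"
  shows "\<forall>i<n. \<forall>j<n. \<forall>k<n. D i j k = P i j k"
proof -
  interpret regular_q_cycle_coalg n P D
    using assms(2-4) by unfold_locales
  show ?thesis
    using D_eq_P by blast
qed

end
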